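(* Let $b>0$ and define, for $r>0$, \[ \begin{aligned} \underline u_{\rm out}(r)&= Lr^{-m}-br^{-l},\\ \underline v_{\rm out}(r)&= m(n-2-m)Lr^{-m-2}- l(n-2-l)br^{-l-2},\\ \underline w_{\rm out}(r)&= m(m+2)(n-2-m)(n-4-m)Lr^{-m-4}- l(l+2)(n-2-l)(n-4-l)br^{-l-4}, \end{aligned} \] and $\underline r_1=(b/L)^{1/(l-m)}$. Then \[ -\Delta \underline u_{\rm out} =\underline v_{\rm out} \ \text{ for all } r>0,\qquad -\Delta \underline v_{\rm out} =\underline w_{\rm out} \ \text{ for all } r>0,\qquad -\Delta \underline w_{\rm out} \leqslant \underline u_{\rm out}^p \ \text{ for all } r>\underline r_1 . \]
   Context: Let $n\geqslant 15$ and $p>p_{\mathsf{JL}}(6,n)$, where $p_{\mathsf{JL}}(6,n)=\frac{(n+4)\sqrt{3} - \sqrt{\sqrt[3]{K_0+K_1}+ \sqrt[3]{K_0-K_1} + 3n^2+32 }}{(n-8)\sqrt{3} - \sqrt{\sqrt[3]{K_0+K_1} + \sqrt[3]{K_0-K_1} + 3n^2+32 }}$ with $2K_0 =-27n^6+324 n^5-756n^4-2592 n^3 + 25776 n^2 +5184 n -23744$, $2K_1 = \sqrt{(2K_0)^2 - 4(192n^2+256)^3}$. Let $m=6/(p-1)$, $L=\big(m(m+2)(m+4)(n-2-m)(n-4-m)(n-6-m)\big)^{1/(p-1)}$, and let $\lambda_3$ be the smallest positive root of $P(\lambda)=(m+\lambda)(m+\lambda+2)(m+\lambda+4)(n-2-m-\lambda)(n-4-m-\lambda)(n-6-m-\lambda)-pL^{p-1}$;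 set $l=m+\lambda_3$. For a function $f$ of $r>0$, $\Delta f$ denotes the Laplacian in $\mathbf R^n$ of $x\mapsto f(|x|)$, i.e. $f''+\frac{n-1}{r}f'$. *)

theory Defs
  imports "HOL-Analysis.Analysis"
begin

text \<open>Joseph--Lundgren type exponent p_JL(6,n). Cube roots are real cube roots (root 3).\<close>
definition pJL6 :: "real \<Rightarrow> real" where
  "pJL6 n = (let K0 = (-27*n^6 + 324*n^5 - 756*n^4 - 2592*n^3 + 25776*n^2 + 5184*n - 23744) / 2;
                 K1 = sqrt ((2*K0)^2 - 4*(192*n^2 + 256)^3) / 2;
                 S = sqrt (root 3 (K0 + K1) + root 3 (K0 - K1) + 3*n^2 + 32)
             in ((n + 4) * sqrt 3 - S) / ((n - 8) * sqrt 3 - S))"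

definition mexp :: "real \<Rightarrow> real" where
  "mexp p = 6 / (p - 1)"

definition Lconst :: "real \<Rightarrow> real \<Rightarrow> real" where
  "Lconst n p = (let m = mexp p in
     (m*(m+2)*(m+4)*(n-2-m)*(n-4-m)*(n-6-m)) powr (1/(p-1)))"

definition Ppoly :: "real \<Rightarrow> real \<Rightarrow> real \<Rightarrow> real" where
  "Ppoly n p lam = (let m = mexp p in
     (m+lam)*(m+lam+2)*(m+lam+4)*(n-2-m-lam)*(n-4-m-lam)*(n-6-m-lam) - p * (Lconst n p) powr (p-1))"

definition lam3 :: "real \<Rightarrow> real \<Rightarrow> real" where
  "lam3 n p = (LEAST lam::real. lam > 0 \<and> Ppoly n p lam = 0)"

definition lexp :: "real \<Rightarrow> real \<Rightarrow> real" where
  "lexp n p = mexp p + lam3 n p"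

definition rlap :: "real \<Rightarrow> (real \<Rightarrow> real) \<Rightarrow> real \<Rightarrow> real" where
  "rlap n f r = deriv (deriv f) r + (n - 1) / r * deriv f r"

definition uout :: "real \<Rightarrow> real \<Rightarrow> real \<Rightarrow> real \<Rightarrow> real" where
  "uout n p b r = Lconst n p * r powr (- mexp p) - b * r powr (- lexp n p)"

definition vout :: "real \<Rightarrow> real \<Rightarrow> real \<Rightarrow> real \<Rightarrow> real" where
  "vout n p b r = (let m = mexp p; l = lexp n p in
     m*(n-2-m) * Lconst n p * r powr (-m-2) - l*(n-2-l) * b * r powr (-l-2))"

definition wout :: "real \<Rightarrow> real \<Rightarrow> real \<Rightarrow> real \<Rightarrow> real" where
  "wout n p b r = (let m = mexp p; l = lexp n p in
     m*(m+2)*(n-2-m)*(n-4-m) * Lconst n p * r powr (-m-4)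
     - l*(l+2)*(n-2-l)*(n-4-l) * b * r powr (-l-4))"

definition rone :: "real \<Rightarrow> real \<Rightarrow> real \<Rightarrow> real" where
  "rone n p b = (b / Lconst n p) powr (1 / (lexp n p - mexp p))"

end

(*
  Let Q(x) = x(x+2)(x+4)(N-2-x)(N-4-x)(N-6-x), so that -Delta r^(-x) = x(N-2-x) r^(-x-2) and
  (-Delta)^3 r^(-x) = Q(x) r^(-x-6). The profiles are built from these formulas, so the first two
  identities are exact and -Delta w = Q(m) L r^(-m-6) - Q(l) b r^(-l-6). With L^(p-1) = Q(m) and
  Q(l) = p Q(m) this is X^p - p X^(p-1) Y for X = L r^(-m), Y = b r^(-l); since r > r_1 means Y < X,
  convexity of s \<mapsto> s^p gives the bound by (X - Y)^p = u^p.

  What needs p > p_JL is the existence of lambda_3: P(0) = (1-p) Q(m) < 0, and at the symmetry point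
  (N-6)/2 of Q one has P((N-6)/2 - m) = Q((N-6)/2) - p Q(m), where p Q(m) is a decreasing function of
  ((N-8)/2 - m)^2. The Cardano expression in p_JL is the root sigma^2 of the cubic equation
  p Q(m) = Q((N-6)/2) in that variable, i.e. m_JL = (N-8)/2 - sigma, and p > p_JL means m < m_JL.
*)
theory Submission
  imports Defs
begin

definition tri_lap_symbol :: "real \<Rightarrow> real \<Rightarrow> real" where
  "tri_lap_symbol N x = x*(x+2)*(x+4)*(N-2-x)*(N-4-x)*(N-6-x)"

text \<open>In the definition of p_JL(6,n): jl_P = 2 K_0, and K_0 \<plusminus> K_1 are the Cardano radicands
  for the cubic t^3 - 3 jl_c t = jl_P.\<close>

definition jl_P :: "real \<Rightarrow> real" where
  "jl_P N = -27*N^6 + 324*N^5 - 756*N^4 - 2592*N^3 + 25776*N^2 + 5184*N - 23744"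

definition jl_c :: "real \<Rightarrow> real" where
  "jl_c N = 192*N^2 + 256"

lemma jl_polynomial_signs:
  fixes N :: real
  assumes "15 \<le> N"
  shows "4 * jl_c N ^ 3 < jl_P N ^ 2"
    and "jl_P N < 0"
    and "(-3*N^2-32)^3 - 3 * jl_c N * (-3*N^2-32) < jl_P N"
    and "jl_P N < (-48*N+160)^3 - 3 * jl_c N * (-48*N+160)"
proof -
  obtain k where k: "0 \<le> k" and N: "N = k + 15"
    using assms by (metis add.commute diff_add_cancel diff_ge_0_iff_ge)
  \<comment> \<open>in the variable k every claim becomes a polynomial with positive coefficients\<close>
  have "jl_P N ^ 2 - 4 * jl_c N ^ 3 = 10214160759983817 + k*(10585461850409628 + k*(4894534148604354
      + k*(1347076448060364 + k*(246965545626615 + k*(31863611628216 + k*(2971699904988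
      + k*(202081266936 + k*(9951685191 + k*(346289580 + k*(8084610 + k*(113724 + k*729)))))))))))"
    unfolding jl_P_def jl_c_def N by algebra
  also have "\<dots> > 0" using k by (intro add_pos_nonneg mult_nonneg_nonneg add_nonneg_nonneg) auto
  finally show "4 * jl_c N ^ 3 < jl_P N ^ 2" by simp
  have "- jl_P N = 102676259 + k*(52183386 + k*(10679589 + k*(1141452 + k*(67581 + k*(2106 + k*27)))))"
    unfolding jl_P_def N by algebra
  also have "\<dots> > 0" using k by (intro add_pos_nonneg mult_nonneg_nonneg add_nonneg_nonneg) auto
  finally show "jl_P N < 0" by simp
  have "jl_P N - ((-3*N^2-32)^3 - 3 * jl_c N * (-3*N^2-32))
      = 158546808 + k*(58825764 + k*(8645616 + k*(629208 + k*(22680 + k*324))))"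
    unfolding jl_P_def jl_c_def N by algebra
  also have "\<dots> > 0" using k by (intro add_pos_nonneg mult_nonneg_nonneg add_nonneg_nonneg) auto
  finally show "(-3*N^2-32)^3 - 3 * jl_c N * (-3*N^2-32) < jl_P N" by simp
  have "(-48*N+160)^3 - 3 * jl_c N * (-48*N+160) - jl_P N
      = 66339 + k*(22959450 + k*(7960869 + k*(1058508 + k*(67581 + k*(2106 + k*27)))))"
    unfolding jl_P_def jl_c_def N by algebra
  also have "\<dots> > 0" using k by (intro add_pos_nonneg mult_nonneg_nonneg add_nonneg_nonneg) auto
  finally show "jl_P N < (-48*N+160)^3 - 3 * jl_c N * (-48*N+160)" by simp
qed

lemma cardano_real_root:
  fixes P c :: real
  assumes "4 * c^3 \<le> P^2"
  defines "t \<equiv> root 3 (P/2 + sqrt (P^2 - 4*c^3)/2) + root 3 (P/2 - sqrt (P^2 - 4*c^3)/2)"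
  shows "t^3 - 3*c*t = P" and "4*c \<le> t^2"
proof -
  define u where "u = root 3 (P/2 + sqrt (P^2 - 4*c^3)/2)"
  define v where "v = root 3 (P/2 - sqrt (P^2 - 4*c^3)/2)"
  have "u^3 + v^3 = P" unfolding u_def v_def by (simp add: odd_real_root_pow)
  have "u * v = root 3 ((P/2 + sqrt (P^2 - 4*c^3)/2) * (P/2 - sqrt (P^2 - 4*c^3)/2))"
    unfolding u_def v_def by (simp add: real_root_mult)
  also have "(P/2 + sqrt (P^2 - 4*c^3)/2) * (P/2 - sqrt (P^2 - 4*c^3)/2) = c^3"
    using assms by (simp add: algebra_simps power2_eq_square[symmetric] power_divide) (simp add: field_simps)
  finally have "u * v = c" by (simp add: odd_real_root_power_cancel)
  have "t = u + v" unfolding t_def u_def v_def ..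
  show "t^3 - 3*c*t = P"
    unfolding \<open>t = u + v\<close> \<open>u^3 + v^3 = P\<close>[symmetric] \<open>u * v = c\<close>[symmetric] by algebra
  have "t^2 - 4*c = (u - v)^2"
    unfolding \<open>t = u + v\<close> \<open>u * v = c\<close>[symmetric] by algebra
  then show "4*c \<le> t^2" by (metis diff_ge_0_iff_ge zero_le_power2)
qed

lemma cubic_less_iff:
  fixes c x t :: real
  assumes "0 < c" "4*c \<le> t^2" "0 \<le> x*t"
  shows "(x < t) = (x^3 - 3*c*x < t^3 - 3*c*t)"
    and "(t < x) = (t^3 - 3*c*t < x^3 - 3*c*x)"
proof -
  have q: "0 < x^2 + x*t + t^2 - 3*c" using assms by (smt (verit) zero_le_power2)
  have "x^3 - 3*c*x - (t^3 - 3*c*t) = (x - t) * (x^2 + x*t + t^2 - 3*c)" by algebra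
  then show "(x < t) = (x^3 - 3*c*x < t^3 - 3*c*t)"
    and "(t < x) = (t^3 - 3*c*t < x^3 - 3*c*x)"
    using q by (smt (verit) mult_pos_pos mult_neg_pos)+
qed

lemma pJL6_cardano:
  fixes N :: real
  assumes "15 \<le> N"
  obtains t where "t^3 - 3 * jl_c N * t = jl_P N" "-3*N^2-32 < t" "t < -48*N+160"
    "pJL6 N = ((N+4) * sqrt 3 - sqrt (t + 3*N^2 + 32)) / ((N-8) * sqrt 3 - sqrt (t + 3*N^2 + 32))"
proof -
  note signs = jl_polynomial_signs[OF assms]
  define c where "c = jl_c N"
  define t where "t = root 3 (jl_P N/2 + sqrt (jl_P N^2 - 4*c^3)/2)
                    + root 3 (jl_P N/2 - sqrt (jl_P N^2 - 4*c^3)/2)"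
  have cubic: "t^3 - 3*c*t = jl_P N" and t2: "4*c \<le> t^2"
    using cardano_real_root[of c "jl_P N"] signs(1) unfolding t_def c_def by auto
  have c0: "0 < c" unfolding c_def jl_c_def by (simp add: add_nonneg_pos)
  have "t * (t^2 - 3*c) < 0"
    using cubic signs(2) by (simp add: algebra_simps power3_eq_cube power2_eq_square)
  moreover have "0 < t^2 - 3*c" using c0 t2 by simp
  ultimately have t0: "t < 0" by (simp add: mult_less_0_iff)
  have "0 \<le> (-3*N^2-32) * t"
    using t0 by (intro mult_nonpos_nonpos) (auto intro: order_trans[of _ 0] simp del: minus_mult_left)
  then have lower: "-3*N^2-32 < t"
    using cubic_less_iff(1)[OF c0 t2] signs(3) cubic by (simp add: c_def)
  have "0 \<le> (-48*N+160) * t"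
    using t0 assms by (intro mult_nonpos_nonpos) auto
  then have upper: "t < -48*N+160"
    using cubic_less_iff(2)[OF c0 t2] signs(4) cubic by (simp add: c_def)
  have "pJL6 N = ((N+4) * sqrt 3 - sqrt (t + 3*N^2 + 32)) / ((N-8) * sqrt 3 - sqrt (t + 3*N^2 + 32))"
    unfolding pJL6_def Let_def jl_P_def[symmetric] jl_c_def[symmetric] t_def c_def by simp
  with cubic lower upper show thesis using that unfolding c_def by blast
qed

lemma pJL6_shifted_form:
  fixes N :: real
  assumes "15 \<le> N"
  obtains \<sigma> where "0 \<le> \<sigma>" "\<sigma> < (N-8)/2" "pJL6 N = 1 + 6 / ((N-8)/2 - \<sigma>)"
    "(((N-4)/2)^2 - \<sigma>^2) * ((N/2)^2 - \<sigma>^2) * (((N+4)/2)^2 - \<sigma>^2) = tri_lap_symbol N ((N-6)/2)"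
proof -
  obtain t where cubic: "t^3 - 3 * jl_c N * t = jl_P N" and lower: "-3*N^2-32 < t"
    and upper: "t < -48*N+160"
    and pJL: "pJL6 N = ((N+4) * sqrt 3 - sqrt (t + 3*N^2 + 32)) / ((N-8) * sqrt 3 - sqrt (t + 3*N^2 + 32))"
    using pJL6_cardano[OF assms] by blast
  define \<sigma> where "\<sigma> = sqrt ((t + 3*N^2 + 32) / 12)"
  have "0 \<le> (t + 3*N^2 + 32) / 12" using lower by (simp add: field_simps)
  then have \<sigma>0: "0 \<le> \<sigma>" and \<sigma>2: "\<sigma>^2 = (t + 3*N^2 + 32) / 12"
    unfolding \<sigma>_def by (simp_all only: real_sqrt_ge_zero real_sqrt_pow2)
  have "\<sigma>^2 < ((N-8)/2)^2" unfolding \<sigma>2 using upper by (simp add: power2_eq_square field_simps)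
  then have \<sigma>N: "\<sigma> < (N-8)/2" by (rule power_less_imp_less_base) (use assms in simp)
  have "t + 3*N^2 + 32 = 12 * \<sigma>^2" using \<sigma>2 by simp
  moreover have "sqrt 12 = 2 * sqrt 3" using real_sqrt_mult[of 4 3] by simp
  ultimately have S: "sqrt (t + 3*N^2 + 32) = 2 * sqrt 3 * \<sigma>"
    using \<sigma>0 by (simp add: real_sqrt_mult)
  have "(N+4) * sqrt 3 - 2 * sqrt 3 * \<sigma> = sqrt 3 * (N+4-2*\<sigma>)"
    and "(N-8) * sqrt 3 - 2 * sqrt 3 * \<sigma> = sqrt 3 * (N-8-2*\<sigma>)" by algebra+
  then have "pJL6 N = (N+4-2*\<sigma>) / (N-8-2*\<sigma>)" unfolding pJL S by simp
  also have "\<dots> = 1 + 6 / ((N-8)/2 - \<sigma>)" using \<sigma>N by (simp add: field_simps)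
  finally have "pJL6 N = 1 + 6 / ((N-8)/2 - \<sigma>)" .
  moreover have "(((N-4)/2)^2 - \<sigma>^2) * ((N/2)^2 - \<sigma>^2) * (((N+4)/2)^2 - \<sigma>^2)
      - tri_lap_symbol N ((N-6)/2)
    = - ((12*\<sigma>^2-3*N^2-32)^3 - 3*jl_c N*(12*\<sigma>^2-3*N^2-32) - jl_P N) / 1728"
    unfolding tri_lap_symbol_def jl_P_def jl_c_def by (simp add: field_simps) algebra
  moreover have "12*\<sigma>^2-3*N^2-32 = t" using \<sigma>2 by simp
  ultimately show thesis using that \<sigma>0 \<sigma>N cubic by simp
qed

lemma diff_prod3_antimono:
  fixes a b c w w' :: real
  assumes "w \<le> w'" "w' \<le> a" "a \<le> b" "b \<le> c"
  shows "(a - w') * (b - w') * (c - w') \<le> (a - w) * (b - w) * (c - w)"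
  using assms by (intro mult_mono) auto

lemma jl_threshold:
  fixes N p :: real
  assumes "15 \<le> N" "pJL6 N < p"
  shows "1 < p" "0 < mexp p" "mexp p < (N-8)/2"
    and "p * tri_lap_symbol N (mexp p) \<le> tri_lap_symbol N ((N-6)/2)"
proof -
  obtain \<sigma> where \<sigma>0: "0 \<le> \<sigma>" and \<sigma>N: "\<sigma> < (N-8)/2"
    and pJL: "pJL6 N = 1 + 6 / ((N-8)/2 - \<sigma>)"
    and crit: "(((N-4)/2)^2 - \<sigma>^2) * ((N/2)^2 - \<sigma>^2) * (((N+4)/2)^2 - \<sigma>^2) = tri_lap_symbol N ((N-6)/2)"
    using pJL6_shifted_form[OF assms(1)] by blast
  define m where "m = mexp p"
  have gap: "6 / ((N-8)/2 - \<sigma>) < p - 1" using assms(2) pJL by simp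
  moreover have "0 < 6 / ((N-8)/2 - \<sigma>)" using \<sigma>N by simp
  ultimately show p1: "1 < p" by linarith
  then show m0: "0 < mexp p" by (simp add: mexp_def)
  have "6 < (p - 1) * ((N-8)/2 - \<sigma>)" using gap \<sigma>N by (simp add: divide_less_eq)
  then have mlt: "m < (N-8)/2 - \<sigma>" unfolding m_def mexp_def using p1 by (simp add: divide_less_eq mult.commute)
  then show "mexp p < (N-8)/2" using \<sigma>0 m_def by linarith
  have "p * tri_lap_symbol N m = (m+2)*(m+4)*(m+6)*(N-2-m)*(N-4-m)*(N-6-m)"
    using p1 m0 unfolding m_def mexp_def tri_lap_symbol_def by (simp add: field_simps)
  also have "\<dots> = (((N-4)/2)^2 - ((N-8)/2 - m)^2) * ((N/2)^2 - ((N-8)/2 - m)^2)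
                  * (((N+4)/2)^2 - ((N-8)/2 - m)^2)"
    by (simp add: power2_eq_square field_simps)
  also have "\<dots> \<le> (((N-4)/2)^2 - \<sigma>^2) * ((N/2)^2 - \<sigma>^2) * (((N+4)/2)^2 - \<sigma>^2)"
  proof (rule diff_prod3_antimono)
    show "\<sigma>^2 \<le> ((N-8)/2 - m)^2" using \<sigma>0 mlt by (intro power_mono) auto
    show "((N-8)/2 - m)^2 \<le> ((N-4)/2)^2"
      using m0 mlt \<sigma>0 m_def by (intro power_mono) (auto simp: field_simps)
  qed (use assms(1) in \<open>auto intro!: power_mono\<close>)
  finally show "p * tri_lap_symbol N (mexp p) \<le> tri_lap_symbol N ((N-6)/2)"
    unfolding crit m_def .
qed

lemma Least_positive_root:
  fixes f :: "real \<Rightarrow> real" and a :: real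
  assumes "continuous_on {0..a} f" "f 0 < 0" "0 \<le> f a" "0 \<le> a"
  shows "0 < (LEAST x. 0 < x \<and> f x = 0)" and "f (LEAST x. 0 < x \<and> f x = 0) = 0"
proof -
  define Z where "Z = {x \<in> {0..a}. f x = 0}"
  obtain z where "0 \<le> z" "z \<le> a" "f z = 0"
    using IVT'[of f 0 0 a] assms by force
  then have "Z \<noteq> {}" unfolding Z_def by auto
  have "closed Z" unfolding Z_def using assms(1) by (rule continuous_closed_preimage_constant) simp
  then have "compact ({0..a} \<inter> Z)" by (intro compact_Int_closed) auto
  moreover have "{0..a} \<inter> Z = Z" unfolding Z_def by auto
  ultimately obtain x0 where x0: "x0 \<in> Z" and min: "\<And>y. y \<in> Z \<Longrightarrow> x0 \<le> y"
    using compact_attains_inf \<open>Z \<noteq> {}\<close> by metis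
  have "0 < x0 \<and> f x0 = 0" using x0 assms(2) unfolding Z_def by (cases "x0 = 0") auto
  moreover have "x0 \<le> y" if "0 < y \<and> f y = 0" for y
    using that min[of y] x0 unfolding Z_def by (cases "y \<le> a") auto
  ultimately have "(LEAST x. 0 < x \<and> f x = 0) = x0" by (rule Least_equality)
  with \<open>0 < x0 \<and> f x0 = 0\<close> show "0 < (LEAST x. 0 < x \<and> f x = 0)" "f (LEAST x. 0 < x \<and> f x = 0) = 0"
    by simp_all
qed

lemma Lconst_powr:
  fixes N p :: real
  assumes "1 < p" "0 < tri_lap_symbol N (mexp p)"
  shows "0 < Lconst N p" and "Lconst N p powr (p-1) = tri_lap_symbol N (mexp p)"
proof -
  have L: "Lconst N p = tri_lap_symbol N (mexp p) powr (1/(p-1))"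
    by (simp only: Lconst_def Let_def tri_lap_symbol_def)
  show "0 < Lconst N p" unfolding L using assms(2) by simp
  show "Lconst N p powr (p-1) = tri_lap_symbol N (mexp p)"
    unfolding L powr_powr using assms by simp
qed

lemma Ppoly_eq:
  assumes "Lconst N p powr (p-1) = tri_lap_symbol N (mexp p)"
  shows "Ppoly N p \<mu> = tri_lap_symbol N (mexp p + \<mu>) - p * tri_lap_symbol N (mexp p)"
  unfolding Ppoly_def Let_def assms tri_lap_symbol_def by (simp add: diff_diff_eq[symmetric])

lemma lexp_root:
  fixes N p :: real
  assumes "15 \<le> N" "pJL6 N < p"
  shows "mexp p < lexp N p" and "tri_lap_symbol N (lexp N p) = p * tri_lap_symbol N (mexp p)"
proof -
  note th = jl_threshold[OF assms]
  define m where "m = mexp p"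
  have Q0: "0 < tri_lap_symbol N m" using th(2,3) unfolding m_def tri_lap_symbol_def by simp
  have P: "Ppoly N p \<mu> = tri_lap_symbol N (m + \<mu>) - p * tri_lap_symbol N m" for \<mu>
    using Ppoly_eq Lconst_powr(2)[OF th(1)] Q0 unfolding m_def by blast
  have "continuous_on {0..(N-6)/2 - m} (Ppoly N p)"
    unfolding P tri_lap_symbol_def by (intro continuous_intros)
  moreover have "Ppoly N p 0 < 0" unfolding P using th(1) Q0 by simp
  moreover have "0 \<le> Ppoly N p ((N-6)/2 - m)" unfolding P using th(4) m_def by simp
  moreover have "0 \<le> (N-6)/2 - m" using th(3) m_def by simp
  ultimately have "0 < lam3 N p" "Ppoly N p (lam3 N p) = 0"
    unfolding lam3_def by (rule Least_positive_root)+
  then show "mexp p < lexp N p" and "tri_lap_symbol N (lexp N p) = p * tri_lap_symbol N (mexp p)"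
    unfolding lexp_def P m_def by simp_all
qed

lemma minus_rlap_powr_diff:
  fixes A B a b N r :: real
  assumes "0 < r"
  shows "- rlap N (\<lambda>x. A * x powr (-a) - B * x powr (-b)) r
       = A*a*(N-2-a) * r powr (-a-2) - B*b*(N-2-b) * r powr (-b-2)"
proof -
  define f where "f = (\<lambda>x::real. A * x powr (-a) - B * x powr (-b))"
  define f' where "f' = (\<lambda>x::real. B*b * x powr (-b-1) - A*a * x powr (-a-1))"
  have "(f has_real_derivative f' x) (at x)" if "0 < x" for x
    unfolding f_def f'_def using that by (auto intro!: derivative_eq_intros simp: algebra_simps)
  then have deriv_f: "deriv f x = f' x" if "0 < x" for x
    using that by (simp add: DERIV_imp_deriv)
  have "(f' has_real_derivative A*a*(a+1) * r powr (-a-2) - B*b*(b+1) * r powr (-b-2)) (at r)"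
    unfolding f'_def using assms by (auto intro!: derivative_eq_intros simp: algebra_simps)
  then have "(deriv f has_real_derivative A*a*(a+1) * r powr (-a-2) - B*b*(b+1) * r powr (-b-2)) (at r)"
    by (rule has_field_derivative_transform_within_open[of _ _ _ "{0<..}"]) (use assms deriv_f in auto)
  moreover have powr_shift: "r powr (e - 1) = r powr (e - 2) * r" for e
    using powr_add[of r "e - 2" 1] assms by simp
  ultimately have "rlap N f r = A*a*(a+1) * r powr (-a-2) - B*b*(b+1) * r powr (-b-2)
      + (N-1) / r * (B*b * (r powr (-b-2) * r) - A*a * (r powr (-a-2) * r))"
    unfolding rlap_def deriv_f[OF assms] f'_def by (simp add: DERIV_imp_deriv)
  also have "\<dots> = - (A*a*(N-2-a) * r powr (-a-2) - B*b*(N-2-b) * r powr (-b-2))"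
    using assms by (simp add: field_simps)
  finally show ?thesis unfolding f_def by simp
qed

lemma minus_rlap_uout:
  fixes N p b r :: real
  assumes "0 < r"
  shows "- rlap N (uout N p b) r = vout N p b r"
proof -
  have "uout N p b = (\<lambda>x. Lconst N p * x powr (- mexp p) - b * x powr (- lexp N p))"
    unfolding uout_def ..
  then show ?thesis
    unfolding vout_def Let_def by (simp add: minus_rlap_powr_diff[OF assms] mult_ac)
qed

lemma minus_rlap_vout:
  fixes N p b r :: real
  assumes "0 < r"
  shows "- rlap N (vout N p b) r = wout N p b r"
proof -
  define m l L where "m = mexp p" and "l = lexp N p" and "L = Lconst N p"
  have shift: "-(x+2) = -x-2" "-x-2-2 = -x-4" "N-2-(x+2) = N-4-x" for x :: real by simp_all
  have v: "vout N p b = (\<lambda>x. (m*(N-2-m)*L) * x powr (-(m+2)) - (l*(N-2-l)*b) * x powr (-(l+2)))"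
    unfolding vout_def Let_def m_def l_def L_def shift ..
  show ?thesis
    unfolding v minus_rlap_powr_diff[OF assms]
    unfolding wout_def Let_def m_def[symmetric] l_def[symmetric] L_def[symmetric] shift
    by (simp add: mult_ac)
qed

lemma minus_rlap_wout:
  fixes N p b r :: real
  assumes "0 < r"
  shows "- rlap N (wout N p b) r = tri_lap_symbol N (mexp p) * Lconst N p * r powr (- mexp p - 6)
                                  - tri_lap_symbol N (lexp N p) * b * r powr (- lexp N p - 6)"
proof -
  define m l L where "m = mexp p" and "l = lexp N p" and "L = Lconst N p"
  have shift: "-(x+4) = -x-4" "-x-4-2 = -x-6" "N-2-(x+4) = N-6-x" for x :: real by simp_all
  have w: "wout N p b = (\<lambda>x. (m*(m+2)*(N-2-m)*(N-4-m)*L) * x powr (-(m+4))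
                            - (l*(l+2)*(N-2-l)*(N-4-l)*b) * x powr (-(l+4)))"
    unfolding wout_def Let_def m_def l_def L_def shift ..
  show ?thesis
    unfolding w minus_rlap_powr_diff[OF assms]
    unfolding m_def[symmetric] l_def[symmetric] L_def[symmetric] tri_lap_symbol_def shift
    by (simp add: mult_ac)
qed

lemma powr_above_tangent:
  fixes p x y :: real
  assumes "1 \<le> p" "0 < x" "0 < y"
  shows "x powr p + p * x powr (p-1) * (y - x) \<le> y powr p"
proof -
  have "((\<lambda>t. t powr p) has_real_derivative p * x powr (p-1)) (at x within {0<..})"
    using assms by (auto intro!: derivative_eq_intros)
  then have "p * x powr (p-1) * (y - x) \<le> y powr p - x powr p"
    using assms by (intro convex_on_imp_above_tangent[OF powr_convex[OF assms(1)]])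
      (auto simp: interior_open)
  then show ?thesis by simp
qed

lemma powr_profile_lower_bound:
  fixes A L b l m p r :: real
  assumes "1 \<le> p" "0 < L" "0 < r" "m * (p-1) = 6" "L powr (p-1) = A"
    and "b * r powr (-l) < L * r powr (-m)"
  shows "A * L * r powr (-m-6) - p * A * b * r powr (-l-6)
       \<le> (L * r powr (-m) - b * r powr (-l)) powr p"
proof -
  define X where "X = L * r powr (-m)"
  define Y where "Y = b * r powr (-l)"
  have X0: "0 < X" unfolding X_def using assms by simp
  have "X powr (p-1) = L powr (p-1) * (r powr (-m)) powr (p-1)"
    unfolding X_def by (rule powr_mult)
  also have "\<dots> = A * r powr (-6)"
    using assms by (simp add: powr_powr)
  finally have Xp1: "X powr (p-1) = A * r powr (-6)" .
  have "X powr p = X * X powr (p-1)"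
    using X0 powr_add[of X 1 "p-1"] by simp
  also have "\<dots> = A * L * r powr (-m-6)"
    unfolding Xp1 unfolding X_def using powr_add[of r "-m" "-6"] by (simp add: algebra_simps)
  finally have e1: "X powr p = A * L * r powr (-m-6)" .
  have e2: "p * X powr (p-1) * Y = p * A * b * r powr (-l-6)"
    unfolding Xp1 Y_def using powr_add[of r "-l" "-6"] by (simp add: algebra_simps)
  have "X powr p + p * X powr (p-1) * ((X - Y) - X) \<le> (X - Y) powr p"
    using assms X0 unfolding X_def Y_def by (intro powr_above_tangent) auto
  then have "X powr p - p * X powr (p-1) * Y \<le> (X - Y) powr p" by (simp add: algebra_simps)
  then show ?thesis unfolding e1 e2 unfolding X_def Y_def .
qed

lemma powr_less_powr_beyond_crossing:
  fixes b L l m r :: real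
  assumes "0 < b" "0 < L" "m < l" "(b/L) powr (1/(l-m)) < r"
  shows "0 < r" and "b * r powr (-l) < L * r powr (-m)"
proof -
  show r0: "0 < r" using assms(4) by (smt (verit) powr_ge_zero)
  have "b/L = ((b/L) powr (1/(l-m))) powr (l-m)"
    using assms by (simp add: powr_powr)
  also have "\<dots> < r powr (l-m)"
    using assms by (intro powr_less_mono2) auto
  finally have "b < L * r powr (l-m)" using assms by (simp add: divide_less_eq mult.commute)
  then have "b * r powr (-l) < L * r powr (l-m) * r powr (-l)" using r0 by simp
  then show "b * r powr (-l) < L * r powr (-m)" using r0 by (simp add: powr_add[symmetric] mult.assoc)
qed

theorem lemma3p1:
  fixes n :: nat and p b :: real
  assumes "n \<ge> 15" and "p > pJL6 (real n)" and "b > 0"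
  shows "(\<forall>r>0. - rlap (real n) (uout (real n) p b) r = vout (real n) p b r)
       \<and> (\<forall>r>0. - rlap (real n) (vout (real n) p b) r = wout (real n) p b r)
       \<and> (\<forall>r>rone (real n) p b. - rlap (real n) (wout (real n) p b) r \<le> (uout (real n) p b r) powr p)"
proof -
  define N m l L where "N = real n" and "m = mexp p" and "l = lexp N p" and "L = Lconst N p"
  have N: "15 \<le> N" "pJL6 N < p" using assms N_def by simp_all
  note thr = jl_threshold[OF N, folded m_def]
  have Q0: "0 < tri_lap_symbol N m" using thr(2,3) unfolding tri_lap_symbol_def by simp
  note Lc = Lconst_powr[OF thr(1) Q0[unfolded m_def], folded L_def m_def]
  note lroot = lexp_root[OF N, folded l_def m_def]
  have m6: "m * (p-1) = 6" using thr(1) unfolding m_def mexp_def by (simp add: field_simps)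
  have "- rlap N (wout N p b) r \<le> (uout N p b r) powr p" if "rone N p b < r" for r
  proof -
    have r0: "0 < r" and below: "b * r powr (-l) < L * r powr (-m)"
      using powr_less_powr_beyond_crossing[of b L m l r] assms(3) Lc(1) lroot(1) that
      unfolding rone_def l_def m_def L_def by auto
    have "- rlap N (wout N p b) r
        = tri_lap_symbol N m * L * r powr (-m-6) - p * tri_lap_symbol N m * b * r powr (-l-6)"
      using minus_rlap_wout[OF r0] lroot(2) unfolding m_def l_def L_def by simp
    also have "\<dots> \<le> (L * r powr (-m) - b * r powr (-l)) powr p"
      using powr_profile_lower_bound[OF _ Lc(1) r0 m6 Lc(2) below] thr(1) by (simp add: mult_ac)
    also have "\<dots> = uout N p b r powr p" unfolding uout_def m_def l_def L_def ..
    finally show ?thesis .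
  qed
  then show ?thesis using minus_rlap_uout minus_rlap_vout unfolding N_def by blast
qed

end
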